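(* Let $n$ be even, $1\le\eta\le n/2$, and $p\ge1$ an integer. On the fermionic Fock space on $n$ spin orbitals define $$T=\sum_{j,k=0}^{n-1}A_j^\dagger A_k,\qquad V=\sum_{x,y=0}^{\frac n2-1}N_xN_y,$$ and let $|a\rangle$ be the basis state in which modes $1,\dots,\eta-1$ and mode $n/2$ are occupied and all others empty, and $|b\rangle$ the basis state in which modes $0,1,\dots,\eta-1$ are occupied and all others empty. Set $|\psi_\eta\rangle=\frac{1}{\sqrt2}(|a\rangle+i|b\rangle)$ and $|\phi_\eta\rangle=\frac1{\sqrt2}(|a\rangle+|b\rangle)$. Writing $D_p=[V,\ldots[V,T]]$ with $p$ copies of $V$, we have $$|\langle\psi_\eta|D_p|\psi_\eta\rangle|\ (p\text{ odd}),\qquad|\langle\phi_\eta|D_p|\phi_\eta\rangle|\ (p\text{ even})\quad=2^p\eta^p+O(\eta^{p-1}),$$ with the implied constant depending only on $p$.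
   Context: Fermionic Fock space on $n$ spin orbitals (modes labeled $0,\dots,n-1$): the $2^n$-dimensional Hilbert space with orthonormal basis $|c_0,c_1,\dots,c_{n-1}\rangle$, $c_j\in\{0,1\}$, where $c_j=1$ means mode $j$ is occupied. Creation operators: $A_j^\dagger|\dots,0_j,\dots\rangle=(-1)^{\sum_{k<j}c_k}|\dots,1_j,\dots\rangle$, $A_j^\dagger|\dots,1_j,\dots\rangle=0$; annihilation operators $A_j=(A_j^\dagger)^\dagger$; $N_j=A_j^\dagger A_j$. *)

theory Defs
  imports Complex_Main
begin

text \<open>A basis state |c_0,...,c_{n-1}> is identified with
the set of occupied modes S (a subset of {..<n}); a state vector is a function
from occupation sets to complex amplitudes.\<close>

type_synonym fock = "nat set \<Rightarrow> complex"
type_synonym fock_op = "fock \<Rightarrow> fock"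

definition jw_sign :: "nat set \<Rightarrow> nat \<Rightarrow> complex" where
  "jw_sign S j = (-1) ^ card {k \<in> S. k < j}"

text \<open>Creation operator: A_j^dagger |S> = (-1)^{#occupied k<j} |S + j> if j not in S, else 0.\<close>
definition cre :: "nat \<Rightarrow> fock_op" where
  "cre j v = (\<lambda>S. if j \<in> S then jw_sign S j * v (S - {j}) else 0)"

definition ann :: "nat \<Rightarrow> fock_op" where
  "ann j v = (\<lambda>S. if j \<notin> S then jw_sign S j * v (insert j S) else 0)"

definition num :: "nat \<Rightarrow> fock_op" where
  "num j v = cre j (ann j v)"

definition op_T :: "nat \<Rightarrow> fock_op" where
  "op_T n v = (\<lambda>S. \<Sum>j<n. \<Sum>k<n. cre j (ann k v) S)"

definition op_V :: "nat \<Rightarrow> fock_op" where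
  "op_V n v = (\<lambda>S. \<Sum>x<n div 2. \<Sum>y<n div 2. num x (num y v) S)"

definition commut :: "fock_op \<Rightarrow> fock_op \<Rightarrow> fock_op" where
  "commut X Y v = (\<lambda>S. X (Y v) S - Y (X v) S)"

definition nested_comm :: "nat \<Rightarrow> nat \<Rightarrow> fock_op" where
  "nested_comm n p = (commut (op_V n) ^^ p) (op_T n)"

definition ket :: "nat set \<Rightarrow> fock" where
  "ket S = (\<lambda>T. if T = S then 1 else 0)"

definition inner_fock :: "nat \<Rightarrow> fock \<Rightarrow> fock \<Rightarrow> complex" where
  "inner_fock n u v = (\<Sum>S\<in>Pow {..<n}. cnj (u S) * v S)"

definition state_a :: "nat \<Rightarrow> nat \<Rightarrow> nat set" where
  "state_a n \<eta> = {1..<\<eta>} \<union> {n div 2}"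

definition state_b :: "nat \<Rightarrow> nat set" where
  "state_b \<eta> = {0..<\<eta>}"

definition psi :: "nat \<Rightarrow> nat \<Rightarrow> fock" where
  "psi n \<eta> = (\<lambda>S. (ket (state_a n \<eta>) S + \<i> * ket (state_b \<eta>) S) / sqrt 2)"

definition phi :: "nat \<Rightarrow> nat \<Rightarrow> fock" where
  "phi n \<eta> = (\<lambda>S. (ket (state_a n \<eta>) S + ket (state_b \<eta>) S) / sqrt 2)"

end

theory Submission
  imports Defs
begin

text \<open>\<open>V\<close> is diagonal in the occupation basis with eigenvalue \<open>w(S) = |S \<inter> {0..n/2-1}|\<^sup>2\<close>,
so \<open>p\<close>-fold commutation with \<open>V\<close> multiplies each hopping term \<open>A\<^sub>j\<^sup>+ A\<^sub>k\<close> of \<open>T\<close> by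
\<open>(w(S) - w(S'))\<^sup>p\<close>, where \<open>S'\<close> is the state hopped from. The states \<open>a\<close> and \<open>b\<close> differ by
moving one fermion between modes \<open>0\<close> and \<open>n/2\<close>; on a vector supported on \<open>{a, b}\<close> the
diagonal terms carry the factor \<open>0\<^sup>p\<close>, so only the two hops between \<open>a\<close> and \<open>b\<close> survive, with
eigenvalue gap \<open>\<plusminus>(\<eta>\<^sup>2 - (\<eta> - 1)\<^sup>2) = \<plusminus>(2\<eta> - 1)\<close>. For the chosen amplitudes the two
contributions add up in modulus, so the expectation value has modulus exactly \<open>(2\<eta> - 1)\<^sup>p\<close>,
which is \<open>(2\<eta>)\<^sup>p + O(\<eta>\<^sup>p\<^sup>-\<^sup>1)\<close>.\<close>

lemma abs_power_diff_le:
  fixes x y :: real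
  assumes "0 \<le> y" "y \<le> x"
  shows "\<bar>x ^ p - y ^ p\<bar> \<le> real p * x ^ (p - 1) * (x - y)"
proof (cases "x = 0")
  case True
  then show ?thesis using assms by simp
next
  case False
  then have x: "x > 0" using assms by simp
  have "\<bar>(y / x) ^ p - 1 ^ p\<bar> \<le> real p * \<bar>y / x - 1\<bar>"
    using norm_power_diff[of "y / x" 1 p] assms x by simp
  then have "x ^ p * \<bar>(y / x) ^ p - 1\<bar> \<le> x ^ p * (real p * ((x - y) / x))"
    using assms x by (intro mult_left_mono) (auto simp: field_simps)
  moreover have "x ^ p * \<bar>(y / x) ^ p - 1\<bar> = \<bar>x ^ p - y ^ p\<bar>"
    using x by (simp add: power_divide field_simps abs_minus_commute abs_mult)
  moreover have "x ^ p * (real p * ((x - y) / x)) = real p * x ^ (p - 1) * (x - y)"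
    using x by (cases p) (auto simp: field_simps)
  ultimately show ?thesis by simp
qed

lemma sum_sum_eq_single:
  fixes f :: "nat \<Rightarrow> nat \<Rightarrow> 'a::comm_monoid_add"
  assumes "j0 < n" "k0 < n" "\<And>j k. j < n \<Longrightarrow> k < n \<Longrightarrow> (j, k) \<noteq> (j0, k0) \<Longrightarrow> f j k = 0"
  shows "(\<Sum>j<n. \<Sum>k<n. f j k) = f j0 k0"
proof -
  have "(\<Sum>j<n. \<Sum>k<n. f j k) = (\<Sum>(j, k)\<in>{..<n} \<times> {..<n}. f j k)"
    by (simp add: sum.cartesian_product)
  also have "\<dots> = (\<Sum>(j, k)\<in>{(j0, k0)}. f j k)"
    using assms by (intro sum.mono_neutral_right) auto
  finally show ?thesis by simp
qed

definition V_eigenvalue :: "nat \<Rightarrow> nat set \<Rightarrow> complex" where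
  "V_eigenvalue n S = of_nat (card (S \<inter> {..<n div 2}) ^ 2)"

lemma jw_sign_square: "jw_sign S j * jw_sign S j = 1"
  unfolding jw_sign_def by (simp flip: power_add mult_2)

lemma jw_sign_remove_self: "jw_sign (S - {j}) j = jw_sign S j"
  unfolding jw_sign_def by (rule arg_cong[where f = "\<lambda>A. (-1) ^ card A"]) auto

lemma jw_sign_insert_self: "jw_sign (insert j S) j = jw_sign S j"
  unfolding jw_sign_def by (rule arg_cong[where f = "\<lambda>A. (-1) ^ card A"]) auto

lemma num_apply: "num x v S = (if x \<in> S then v S else 0)"
  unfolding num_def cre_def ann_def
  using jw_sign_square[of S x] by (auto simp: jw_sign_remove_self insert_absorb)

lemma op_V_apply: "op_V n v S = V_eigenvalue n S * v S"
proof -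
  have count: "(\<Sum>x<n div 2. if x \<in> S then 1 else 0) = (of_nat (card (S \<inter> {..<n div 2})) :: complex)"
    by (simp add: sum.If_cases Int_commute)
  have "op_V n v S =
      (\<Sum>x<n div 2. \<Sum>y<n div 2. (if x \<in> S then 1 else 0) * ((if y \<in> S then 1 else 0) * v S))"
    unfolding op_V_def num_apply by (auto intro!: sum.cong)
  also have "\<dots> = (\<Sum>x<n div 2. if x \<in> S then 1 else 0) * ((\<Sum>y<n div 2. if y \<in> S then 1 else 0) * v S)"
    by (simp add: sum_distrib_left sum_distrib_right mult.assoc mult.left_commute)
  finally show ?thesis
    unfolding count V_eigenvalue_def by (simp add: power2_eq_square)
qed

lemma cre_ann_apply:
  "cre j (ann k v) S =
    (if j \<in> S \<and> k \<notin> S - {j} then jw_sign S j * jw_sign (S - {j}) k * v (insert k (S - {j})) else 0)"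
  unfolding cre_def ann_def by simp

lemma nested_comm_apply:
  "nested_comm n p v S =
    (\<Sum>j<n. \<Sum>k<n. (V_eigenvalue n S - V_eigenvalue n (insert k (S - {j}))) ^ p * cre j (ann k v) S)"
proof (induction p arbitrary: v S)
  case 0
  then show ?case by (simp add: nested_comm_def op_T_def)
next
  case (Suc p)
  have cre_ann_scale: "cre j (ann k (\<lambda>T. f T * v T)) S = f (insert k (S - {j})) * cre j (ann k v) S"
    for f :: "nat set \<Rightarrow> complex" and j k
    unfolding cre_def ann_def by auto
  have "nested_comm n (Suc p) v S = V_eigenvalue n S * nested_comm n p v S - nested_comm n p (op_V n v) S"
    by (simp add: nested_comm_def commut_def op_V_apply)
  then show ?case
    unfolding Suc.IH op_V_apply[abs_def] cre_ann_scale
    by (simp add: sum_distrib_left sum_subtractf[symmetric] algebra_simps)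
qed

lemma hop_onto_shifted_state:
  assumes "j \<notin> X" "k \<notin> X" "j \<noteq> k" "j' \<in> insert j X"
    and hop: "insert k' (insert j X - {j'}) = insert k X"
  shows "j' = j \<and> k' = k"
proof -
  have "j' = j"
  proof (rule ccontr)
    assume "j' \<noteq> j"
    then have "j \<in> insert k' (insert j X - {j'})" by simp
    then have "j \<in> insert k X" by (simp only: hop)
    then show False using assms(1,3) by simp
  qed
  then have "insert k' X = insert k X" using hop assms(1) by simp
  then have "k' = k" using assms(2) by (metis insertE insertI1)
  with \<open>j' = j\<close> show ?thesis ..
qed

lemma nested_comm_two_state_apply:
  assumes "j < n" "k < n" "j \<noteq> k" "j \<notin> X" "k \<notin> X" "p \<ge> 1"
    and supp: "\<And>S. S \<noteq> insert j X \<Longrightarrow> S \<noteq> insert k X \<Longrightarrow> v S = 0"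
  shows "nested_comm n p v (insert j X) =
    (V_eigenvalue n (insert j X) - V_eigenvalue n (insert k X)) ^ p * jw_sign X j * jw_sign X k * v (insert k X)"
proof -
  let ?a = "insert j X" and ?b = "insert k X"
  have "nested_comm n p v ?a =
      (V_eigenvalue n ?a - V_eigenvalue n (insert k (?a - {j}))) ^ p * cre j (ann k v) ?a"
    unfolding nested_comm_apply
  proof (rule sum_sum_eq_single)
    fix j' k' assume "j' < n" "k' < n" "(j', k') \<noteq> (j, k)"
    let ?S = "insert k' (?a - {j'})"
    show "(V_eigenvalue n ?a - V_eigenvalue n ?S) ^ p * cre j' (ann k' v) ?a = 0"
    proof (cases "j' \<in> ?a \<and> k' \<notin> ?a - {j'}")
      case True
      then have "?S \<noteq> ?b"
        using hop_onto_shifted_state[of j X k j' k'] assms(3-5) \<open>(j', k') \<noteq> (j, k)\<close> by blast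
      then consider "V_eigenvalue n ?S = V_eigenvalue n ?a" | "v ?S = 0"
        using supp by metis
      then show ?thesis
        using \<open>p \<ge> 1\<close> by cases (simp_all add: cre_ann_apply)
    qed (auto simp: cre_ann_apply)
  qed (use assms in simp_all)
  also have "\<dots> = (V_eigenvalue n ?a - V_eigenvalue n ?b) ^ p * jw_sign X j * jw_sign X k * v ?b"
    using assms by (simp add: cre_ann_apply jw_sign_insert_self)
  finally show ?thesis .
qed

lemma inner_fock_two_state:
  assumes "a \<subseteq> {..<n}" "b \<subseteq> {..<n}" "a \<noteq> b"
    and supp: "\<And>S. S \<noteq> a \<Longrightarrow> S \<noteq> b \<Longrightarrow> u S = 0"
  shows "inner_fock n u w = cnj (u a) * w a + cnj (u b) * w b"
proof -
  have "inner_fock n u w = (\<Sum>S\<in>{a, b}. cnj (u S) * w S)"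
    unfolding inner_fock_def using assms by (intro sum.mono_neutral_right) auto
  then show ?thesis
    using \<open>a \<noteq> b\<close> by simp
qed

lemma expectation_nested_comm_two_state:
  assumes "j < n" "k < n" "j \<noteq> k" "j \<notin> X" "k \<notin> X" "X \<subseteq> {..<n}" "p \<ge> 1"
    and supp: "\<And>S. S \<noteq> insert j X \<Longrightarrow> S \<noteq> insert k X \<Longrightarrow> v S = 0"
  shows "inner_fock n v (nested_comm n p v) =
    jw_sign X j * jw_sign X k * (V_eigenvalue n (insert j X) - V_eigenvalue n (insert k X)) ^ p *
      (cnj (v (insert j X)) * v (insert k X) + (-1) ^ p * cnj (v (insert k X)) * v (insert j X))"
proof -
  let ?a = "insert j X" and ?b = "insert k X"
  let ?d = "V_eigenvalue n ?a - V_eigenvalue n ?b"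
  have supp': "\<And>S. S \<noteq> ?b \<Longrightarrow> S \<noteq> ?a \<Longrightarrow> v S = 0"
    using supp by blast
  have at_a: "nested_comm n p v ?a = ?d ^ p * jw_sign X j * jw_sign X k * v ?b"
    by (rule nested_comm_two_state_apply[OF assms(1-5,7) supp])
  have flip: "(V_eigenvalue n ?b - V_eigenvalue n ?a) ^ p = (-1) ^ p * ?d ^ p"
    by (metis minus_diff_eq power_minus)
  have at_b: "nested_comm n p v ?b = (-1) ^ p * ?d ^ p * jw_sign X k * jw_sign X j * v ?a"
    using nested_comm_two_state_apply[OF assms(2,1) assms(3)[symmetric] assms(5,4,7) supp']
    by (simp only: flip)
  have "inner_fock n v (nested_comm n p v) = cnj (v ?a) * nested_comm n p v ?a + cnj (v ?b) * nested_comm n p v ?b"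
  proof (rule inner_fock_two_state[OF _ _ _ supp])
    show "?a \<noteq> ?b" using assms(3,4) by blast
  qed (use assms in auto)
  then show ?thesis
    unfolding at_a at_b by (simp only: ring_distribs mult_ac)
qed

lemma norm_jw_sign [simp]: "cmod (jw_sign S j) = 1"
  by (simp add: jw_sign_def norm_power)

lemma state_a_eq_insert: "state_a n \<eta> = insert (n div 2) {1..<\<eta>}"
  unfolding state_a_def by auto

lemma state_b_eq_insert: "1 \<le> \<eta> \<Longrightarrow> state_b \<eta> = insert 0 {1..<\<eta>}"
  unfolding state_b_def by auto

lemma V_eigenvalue_state_a: "2 * \<eta> \<le> n \<Longrightarrow> V_eigenvalue n (state_a n \<eta>) = of_nat ((\<eta> - 1) ^ 2)"
proof -
  assume "2 * \<eta> \<le> n"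
  then have "state_a n \<eta> \<inter> {..<n div 2} = {1..<\<eta>}"
    unfolding state_a_def by auto
  then show ?thesis
    unfolding V_eigenvalue_def by simp
qed

lemma V_eigenvalue_state_b: "2 * \<eta> \<le> n \<Longrightarrow> V_eigenvalue n (state_b \<eta>) = of_nat (\<eta> ^ 2)"
proof -
  assume "2 * \<eta> \<le> n"
  then have "state_b \<eta> \<inter> {..<n div 2} = {0..<\<eta>}"
    unfolding state_b_def by auto
  then show ?thesis
    unfolding V_eigenvalue_def by simp
qed

lemma norm_V_eigenvalue_gap:
  assumes "1 \<le> \<eta>" "2 * \<eta> \<le> n"
  shows "cmod (V_eigenvalue n (state_a n \<eta>) - V_eigenvalue n (state_b \<eta>)) = real (2 * \<eta> - 1)"
proof -
  have "(\<eta> - 1) ^ 2 + (2 * \<eta> - 1) = \<eta> ^ 2"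
    using assms(1) by (cases \<eta>) (auto simp: power2_eq_square)
  then have "V_eigenvalue n (state_a n \<eta>) - V_eigenvalue n (state_b \<eta>) = - of_nat (2 * \<eta> - 1)"
    unfolding V_eigenvalue_state_a[OF assms(2)] V_eigenvalue_state_b[OF assms(2)]
    by (metis add_diff_cancel_left' minus_diff_eq of_nat_add)
  then show ?thesis
    by (simp only: norm_minus_cancel norm_of_nat)
qed

lemma norm_expectation_nested_comm_ab:
  assumes "1 \<le> \<eta>" "2 * \<eta> \<le> n" "p \<ge> 1"
    and supp: "\<And>S. S \<noteq> state_a n \<eta> \<Longrightarrow> S \<noteq> state_b \<eta> \<Longrightarrow> v S = 0"
  shows "cmod (inner_fock n v (nested_comm n p v)) = real (2 * \<eta> - 1) ^ p *
    cmod (cnj (v (state_a n \<eta>)) * v (state_b \<eta>) + (-1) ^ p * cnj (v (state_b \<eta>)) * v (state_a n \<eta>))"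
proof -
  let ?X = "{1..<\<eta>}"
  have hop: "n div 2 < n" "0 < n" "n div 2 \<noteq> 0" "n div 2 \<notin> ?X" "0 \<notin> ?X" "?X \<subseteq> {..<n}"
    using assms(1,2) by auto
  have a: "state_a n \<eta> = insert (n div 2) ?X" and b: "state_b \<eta> = insert 0 ?X"
    using state_a_eq_insert state_b_eq_insert[OF assms(1)] by simp_all
  have "inner_fock n v (nested_comm n p v) =
      jw_sign ?X (n div 2) * jw_sign ?X 0 * (V_eigenvalue n (state_a n \<eta>) - V_eigenvalue n (state_b \<eta>)) ^ p *
      (cnj (v (state_a n \<eta>)) * v (state_b \<eta>) + (-1) ^ p * cnj (v (state_b \<eta>)) * v (state_a n \<eta>))"
    unfolding a b by (rule expectation_nested_comm_two_state[OF hop assms(3) supp[unfolded a b]])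
  then show ?thesis
    using norm_V_eigenvalue_gap[OF assms(1,2)] by (simp add: norm_mult norm_power)
qed

lemma norm_interference_psi:
  assumes "state_a n \<eta> \<noteq> state_b \<eta>" "odd p"
  shows "cmod (cnj (psi n \<eta> (state_a n \<eta>)) * psi n \<eta> (state_b \<eta>)
    + (-1) ^ p * cnj (psi n \<eta> (state_b \<eta>)) * psi n \<eta> (state_a n \<eta>)) = 1"
proof -
  have "cnj (psi n \<eta> (state_a n \<eta>)) * psi n \<eta> (state_b \<eta>)
      + (-1) ^ p * cnj (psi n \<eta> (state_b \<eta>)) * psi n \<eta> (state_a n \<eta>) = \<i>"
    using assms by (simp add: psi_def ket_def field_simps flip: of_real_mult)
  then show ?thesis by simp
qed

lemma norm_interference_phi:
  assumes "state_a n \<eta> \<noteq> state_b \<eta>" "even p"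
  shows "cmod (cnj (phi n \<eta> (state_a n \<eta>)) * phi n \<eta> (state_b \<eta>)
    + (-1) ^ p * cnj (phi n \<eta> (state_b \<eta>)) * phi n \<eta> (state_a n \<eta>)) = 1"
proof -
  have "cnj (phi n \<eta> (state_a n \<eta>)) * phi n \<eta> (state_b \<eta>)
      + (-1) ^ p * cnj (phi n \<eta> (state_b \<eta>)) * phi n \<eta> (state_a n \<eta>) = 1"
    using assms by (simp add: phi_def ket_def field_simps flip: of_real_mult)
  then show ?thesis by simp
qed

lemma state_a_neq_state_b:
  assumes "1 \<le> \<eta>" "2 * \<eta> \<le> n"
  shows "state_a n \<eta> \<noteq> state_b \<eta>"
proof -
  have "0 \<notin> state_a n \<eta>" "0 \<in> state_b \<eta>"
    using assms unfolding state_a_def state_b_def by auto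
  then show ?thesis by blast
qed

lemma norm_expectation_nested_comm:
  assumes "1 \<le> \<eta>" "2 * \<eta> \<le> n" "p \<ge> 1"
  defines "v \<equiv> if odd p then psi n \<eta> else phi n \<eta>"
  shows "cmod (inner_fock n v (nested_comm n p v)) = real (2 * \<eta> - 1) ^ p"
proof -
  have "v S = 0" if "S \<noteq> state_a n \<eta>" "S \<noteq> state_b \<eta>" for S
    using that unfolding v_def psi_def phi_def ket_def by simp
  note expectation = norm_expectation_nested_comm_ab[OF assms(1-3), of v, OF this]
  show ?thesis
  proof (cases "odd p")
    case True
    then show ?thesis
      using expectation norm_interference_psi[OF state_a_neq_state_b[OF assms(1,2)]] by (simp add: v_def)
  next
    case False
    then show ?thesis
      using expectation norm_interference_phi[OF state_a_neq_state_b[OF assms(1,2)]] by (simp add: v_def)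
  qed
qed

theorem proposition14:
  fixes p :: nat
  assumes "p \<ge> 1"
  shows "\<exists>C::real. \<forall>n \<eta> :: nat. even n \<and> 1 \<le> \<eta> \<and> 2 * \<eta> \<le> n \<longrightarrow>
           \<bar>cmod (inner_fock n (if odd p then psi n \<eta> else phi n \<eta>)
                      (nested_comm n p (if odd p then psi n \<eta> else phi n \<eta>)))
             - 2 ^ p * real \<eta> ^ p\<bar> \<le> C * real \<eta> ^ (p - 1)"
proof (intro exI[of _ "real p * 2 ^ p"] allI impI)
  fix n \<eta> :: nat
  assume "even n \<and> 1 \<le> \<eta> \<and> 2 * \<eta> \<le> n"
  then have \<eta>: "1 \<le> \<eta>" "2 * \<eta> \<le> n"
    by auto
  have "\<bar>(2 * real \<eta>) ^ p - real (2 * \<eta> - 1) ^ p\<bar> \<le> real p * (2 * real \<eta>) ^ (p - 1)"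
    using abs_power_diff_le[of "real (2 * \<eta> - 1)" "2 * real \<eta>" p] \<eta>(1) by (simp add: of_nat_diff)
  also have "\<dots> \<le> real p * (2 ^ p * real \<eta> ^ (p - 1))"
    unfolding power_mult_distrib by (intro mult_left_mono mult_right_mono power_increasing) auto
  finally show "\<bar>cmod (inner_fock n (if odd p then psi n \<eta> else phi n \<eta>)
                      (nested_comm n p (if odd p then psi n \<eta> else phi n \<eta>)))
             - 2 ^ p * real \<eta> ^ p\<bar> \<le> real p * 2 ^ p * real \<eta> ^ (p - 1)"
    unfolding norm_expectation_nested_comm[OF \<eta> assms]
    by (simp add: power_mult_distrib abs_minus_commute mult.assoc)
qed

end
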